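(* Let $A\in M_2(\mathbb R)$ have no eigenvalue in $(-\infty,0]$, with principal disk $\operatorname{PD}(A)=\overline D(a+ib,r)$. Then \[\|\log A\|_2=f_{CA}(a,b,r)+f_{RD}(a,b,r),\qquad \lfloor\log A\rfloor_2=f_{CA}(a,b,r)-f_{RD}(a,b,r),\] where, with $\Delta=a^2+b^2-r^2$, \[f_{CA}=\sqrt{\big(\log\sqrt{\Delta}\big)^2+\Big(\frac{b\operatorname{AC}(a/\sqrt\Delta)}{\sqrt\Delta}\Big)^2},\qquad f_{RD}=\frac{r\operatorname{AC}(a/\sqrt\Delta)}{\sqrt\Delta}.\] In particular if $\det A=1$ then $f_{CA}=\operatorname{AC}(a)b$ and $f_{RD}=\operatorname{AC}(a)r$.
   Context: Write $A=\tilde a\mathrm{Id}_2+\tilde b\tilde I+\tilde c\tilde J+\tilde d\tilde K$ with $\tilde I=\begin{pmatrix}0&-1\\1&0\end{pmatrix}$, $\tilde J=\begin{pmatrix}1&0\\0&-1\end{pmatrix}$, $\tilde K=\begin{pmatrix}0&1\\1&0\end{pmatrix}$ and real coefficients; the principal disk is $\operatorname{PD}(A)=\overline D(\tilde a+|\tilde b|i,\sqrt{\tilde c^2+\tilde d^2})\subset\mathbb C$. $\|\cdot\|_2$ is the operator norm; the signed co-norm is $\lfloor X\rfloor_2=\det X/\|X\|_2$ for $X\ne0$, $\lfloor0\rfloor_2=0$. $\log$ is the principal logarithm. $\operatorname{AC}(x)=\frac{\arccos x}{\sqrt{1-x^2}}$ for $-1<x<1$, $\operatorname{AC}(1)=1$,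 $\operatorname{AC}(x)=\frac{\operatorname{arcosh}x}{\sqrt{x^2-1}}$ for $x>1$. *)

theory Defs
  imports "HOL-Analysis.Analysis"
begin

type_synonym m2 = "real^2^2"

primrec mpow :: "m2 \<Rightarrow> nat \<Rightarrow> m2" where
  "mpow X 0 = mat 1"
| "mpow X (Suc n) = X ** mpow X n"

definition mexp :: "m2 \<Rightarrow> m2" where
  "mexp X = (\<Sum>n. (1 / fact n) *\<^sub>R mpow X n)"

definition is_ceigen :: "m2 \<Rightarrow> complex \<Rightarrow> bool" where
  "is_ceigen X \<mu> \<longleftrightarrow>
     det ((\<chi> i j. (if i = j then \<mu> else 0) - complex_of_real (X $ i $ j)) :: complex^2^2) = 0"

definition plog :: "m2 \<Rightarrow> m2" where
  "plog A = (THE X. mexp X = A \<and> (\<forall>\<mu>. is_ceigen X \<mu> \<longrightarrow> - pi < Im \<mu> \<and> Im \<mu> < pi))"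

definition opnorm2 :: "m2 \<Rightarrow> real" where
  "opnorm2 X = onorm (\<lambda>x. X *v x)"

definition conorm2 :: "m2 \<Rightarrow> real" where
  "conorm2 X = (if X = 0 then 0 else det X / opnorm2 X)"

text \<open>Coefficients w.r.t. Id, I~, J~, K~ and the principal disk.\<close>
definition ca :: "m2 \<Rightarrow> real" where "ca A = (A$1$1 + A$2$2) / 2"
definition cb :: "m2 \<Rightarrow> real" where "cb A = (A$2$1 - A$1$2) / 2"
definition cc :: "m2 \<Rightarrow> real" where "cc A = (A$1$1 - A$2$2) / 2"
definition cd :: "m2 \<Rightarrow> real" where "cd A = (A$1$2 + A$2$1) / 2"

definition PD :: "m2 \<Rightarrow> complex set" where
  "PD A = cball (Complex (ca A) \<bar>cb A\<bar>) (sqrt ((cc A)\<^sup>2 + (cd A)\<^sup>2))"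

definition AC :: "real \<Rightarrow> real" where
  "AC x = (if -1 < x \<and> x < 1 then arccos x / sqrt (1 - x\<^sup>2)
           else if x = 1 then 1
           else if x > 1 then arcosh x / sqrt (x\<^sup>2 - 1)
           else undefined)"

definition fCA :: "real \<Rightarrow> real \<Rightarrow> real \<Rightarrow> real" where
  "fCA a b r = (let \<Delta> = a\<^sup>2 + b\<^sup>2 - r\<^sup>2 in
     sqrt ((ln (sqrt \<Delta>))\<^sup>2 + (b * AC (a / sqrt \<Delta>) / sqrt \<Delta>)\<^sup>2))"

definition fRD :: "real \<Rightarrow> real \<Rightarrow> real \<Rightarrow> real" where
  "fRD a b r = (let \<Delta> = a\<^sup>2 + b\<^sup>2 - r\<^sup>2 in r * AC (a / sqrt \<Delta>) / sqrt \<Delta>)"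

end

theory Submission
  imports Defs
begin

text \<open>
  Every real \<open>2\<times>2\<close> matrix splits as \<open>X = \<xi> I + N\<close> with \<open>\<xi> = ca X\<close> and \<open>N\<close> traceless, and
  \<open>N\<^sup>2 = \<nu> I\<close> with \<open>\<nu> = cc\<^sup>2 + cd\<^sup>2 - cb\<^sup>2\<close>. Summing the exponential series therefore gives
  \<open>exp X = e\<^sup>\<xi> (cosh \<surd>\<nu> I + (sinh \<surd>\<nu> / \<surd>\<nu>) N)\<close>, and the eigenvalues \<open>\<xi> \<plusminus> \<surd>\<nu>\<close> lie in
  the principal strip iff \<open>-\<pi>\<^sup>2 < \<nu>\<close>. Inverting \<open>\<nu> \<mapsto> cosh \<surd>\<nu>\<close> on \<open>(-\<pi>\<^sup>2, \<infinity>)\<close> shows that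
  the principal logarithm of \<open>A\<close> is \<open>ln \<surd>(det A) I + (AC x / \<surd>(det A)) N\<^sub>A\<close> with
  \<open>x = ca A / \<surd>(det A)\<close>.

  On the other hand, write \<open>X = R + S\<close> with rotation part \<open>R = a I + b \<tilde>I\<close> and reflection part
  \<open>S = c \<tilde>J + d \<tilde>K\<close>. Then \<open>|Xv|\<^sup>2 = (a\<^sup>2+b\<^sup>2+c\<^sup>2+d\<^sup>2)|v|\<^sup>2 + 2 \<langle>Rv, Sv\<rangle>\<close>, and the cross term is
  at most \<open>\<surd>(a\<^sup>2+b\<^sup>2) \<surd>(c\<^sup>2+d\<^sup>2) |v|\<^sup>2\<close>, with equality for some \<open>v \<noteq> 0\<close>. Hence
  \<open>\<parallel>X\<parallel>\<^sub>2 = \<surd>(a\<^sup>2+b\<^sup>2) + \<surd>(c\<^sup>2+d\<^sup>2)\<close>, and since \<open>det X\<close> is the difference of the squares the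
  co-norm is \<open>\<surd>(a\<^sup>2+b\<^sup>2) - \<surd>(c\<^sup>2+d\<^sup>2)\<close>. Applied to \<open>log A\<close> these are \<open>f\<^sub>C\<^sub>A \<plusminus> f\<^sub>R\<^sub>D\<close>.
\<close>

lemma m2_eq_iff:
  "(X::m2) = Y \<longleftrightarrow> X$1$1 = Y$1$1 \<and> X$1$2 = Y$1$2 \<and> X$2$1 = Y$2$1 \<and> X$2$2 = Y$2$2"
  by (auto simp: vec_eq_iff forall_2)

lemma m2_mult_nth: "((X::m2) ** Y)$i$j = X$i$1 * Y$1$j + X$i$2 * Y$2$j"
  by (simp add: matrix_matrix_mult_def sum_2)

lemma m2_mat1_nth [simp]:
  "(mat 1::m2)$1$1 = 1" "(mat 1::m2)$2$2 = 1" "(mat 1::m2)$1$2 = 0" "(mat 1::m2)$2$1 = 0"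
  by (simp_all add: mat_def)

lemma m2_det_eq_coeffs: "det (X::m2) = (ca X)\<^sup>2 + (cb X)\<^sup>2 - (cc X)\<^sup>2 - (cd X)\<^sup>2"
  by (simp add: det_2 ca_def cb_def cc_def cd_def field_simps power2_eq_square)

definition traceless :: "m2 \<Rightarrow> m2" where
  "traceless X = X - ca X *\<^sub>R mat 1"

definition disc :: "m2 \<Rightarrow> real" where
  "disc X = (cc X)\<^sup>2 + (cd X)\<^sup>2 - (cb X)\<^sup>2"

lemma scalar_plus_traceless: "ca X *\<^sub>R mat 1 + traceless X = X"
  by (simp add: traceless_def)

lemma traceless_square: "traceless X ** traceless X = disc X *\<^sub>R mat 1"
  by (simp add: m2_eq_iff m2_mult_nth traceless_def disc_def ca_def cb_def cc_def cd_def
      field_simps power2_eq_square)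

lemma det_eq_ca_disc: "det X = (ca X)\<^sup>2 - disc X"
  by (simp add: m2_det_eq_coeffs disc_def)

lemma coeffs_scalar_plus_traceless [simp]:
  "ca (u *\<^sub>R mat 1 + v *\<^sub>R traceless X) = u"
  "cb (u *\<^sub>R mat 1 + v *\<^sub>R traceless X) = v * cb X"
  "cc (u *\<^sub>R mat 1 + v *\<^sub>R traceless X) = v * cc X"
  "cd (u *\<^sub>R mat 1 + v *\<^sub>R traceless X) = v * cd X"
  by (simp_all add: ca_def cb_def cc_def cd_def traceless_def field_simps)

lemma traceless_scalar_plus_traceless [simp]:
  "traceless (u *\<^sub>R mat 1 + v *\<^sub>R traceless X) = v *\<^sub>R traceless X"
  by (simp add: traceless_def[of "u *\<^sub>R mat 1 + v *\<^sub>R traceless X"])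

lemma disc_scalar_plus_traceless [simp]:
  "disc (u *\<^sub>R mat 1 + v *\<^sub>R traceless X) = v\<^sup>2 * disc X"
  by (simp add: disc_def power_mult_distrib algebra_simps)

lemma is_ceigen_iff: "is_ceigen X \<mu> \<longleftrightarrow> (\<mu> - of_real (ca X))\<^sup>2 = of_real (disc X)"
proof -
  have "det ((\<chi> i j. (if i = j then \<mu> else 0) - complex_of_real (X $ i $ j)) :: complex^2^2)
      = (\<mu> - of_real (ca X))\<^sup>2 - of_real (disc X)"
    by (simp add: det_2 disc_def ca_def cb_def cc_def cd_def field_simps power2_eq_square)
  then show ?thesis
    by (simp add: is_ceigen_def)
qed

fun pow_coeffs :: "real \<Rightarrow> real \<Rightarrow> nat \<Rightarrow> real \<times> real" where
  "pow_coeffs \<xi> \<nu> 0 = (1, 0)"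
| "pow_coeffs \<xi> \<nu> (Suc n) =
     (\<xi> * fst (pow_coeffs \<xi> \<nu> n) + \<nu> * snd (pow_coeffs \<xi> \<nu> n), fst (pow_coeffs \<xi> \<nu> n) + \<xi> * snd (pow_coeffs \<xi> \<nu> n))"

lemma power_scalar_plus_sqrt:
  fixes \<omega> :: "'a::{comm_ring_1, real_algebra_1}"
  assumes "\<omega>\<^sup>2 = of_real \<nu>"
  shows "(of_real \<xi> + \<omega>) ^ n = of_real (fst (pow_coeffs \<xi> \<nu> n)) + \<omega> * of_real (snd (pow_coeffs \<xi> \<nu> n))"
proof (induction n)
  case (Suc n)
  then show ?case
    by (simp add: algebra_simps flip: assms) (simp add: power2_eq_square)
qed simp

lemma matrix_add_rdistrib: "((A + B) ** C) = (A ** C) + (B ** C)"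
  by (vector matrix_matrix_mult_def sum.distrib[symmetric] field_simps)

lemma mpow_scalar_plus_sqrt:
  assumes "(N::m2) ** N = \<nu> *\<^sub>R mat 1"
  shows "mpow (\<xi> *\<^sub>R mat 1 + N) n = fst (pow_coeffs \<xi> \<nu> n) *\<^sub>R mat 1 + snd (pow_coeffs \<xi> \<nu> n) *\<^sub>R N"
proof (induction n)
  case (Suc n)
  then show ?case
    by (simp add: matrix_add_ldistrib matrix_add_rdistrib matrix_scalar_ac
        scalar_matrix_assoc[symmetric] assms algebra_simps)
qed simp

definition cosh_sqrt :: "real \<Rightarrow> real" where
  "cosh_sqrt \<nu> = (if 0 \<le> \<nu> then cosh (sqrt \<nu>) else cos (sqrt (- \<nu>)))"

definition sinch_sqrt :: "real \<Rightarrow> real" where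
  "sinch_sqrt \<nu> =
     (if 0 < \<nu> then sinh (sqrt \<nu>) / sqrt \<nu>
      else if \<nu> = 0 then 1 else sin (sqrt (- \<nu>)) / sqrt (- \<nu>))"

lemma pow_coeffs_sums_exp:
  fixes w :: complex
  assumes "w\<^sup>2 = of_real \<nu>"
  shows "(\<lambda>n. of_real (fst (pow_coeffs \<xi> \<nu> n) / fact n))
           sums ((exp (of_real \<xi> + w) + exp (of_real \<xi> - w)) / 2)"
    and "(\<lambda>n. of_real (snd (pow_coeffs \<xi> \<nu> n) / fact n) * w)
           sums ((exp (of_real \<xi> + w) - exp (of_real \<xi> - w)) / 2)"
proof -
  have exp: "(\<lambda>n. z ^ n /\<^sub>R fact n) sums exp z" for z :: complex
    by (rule exp_converges)
  have plus: "(of_real \<xi> + w) ^ n = of_real (fst (pow_coeffs \<xi> \<nu> n)) + w * of_real (snd (pow_coeffs \<xi> \<nu> n))"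
    and minus: "(of_real \<xi> - w) ^ n = of_real (fst (pow_coeffs \<xi> \<nu> n)) - w * of_real (snd (pow_coeffs \<xi> \<nu> n))" for n
    using power_scalar_plus_sqrt[of w \<nu> \<xi> n] power_scalar_plus_sqrt[of "- w" \<nu> \<xi> n] assms by simp_all
  have "(\<lambda>n. ((of_real \<xi> + w) ^ n /\<^sub>R fact n + (of_real \<xi> - w) ^ n /\<^sub>R fact n) / 2)
          sums ((exp (of_real \<xi> + w) + exp (of_real \<xi> - w)) / 2)"
    by (intro sums_divide sums_add exp)
  then show "(\<lambda>n. of_real (fst (pow_coeffs \<xi> \<nu> n) / fact n))
           sums ((exp (of_real \<xi> + w) + exp (of_real \<xi> - w)) / 2)"
    unfolding plus minus by (simp add: scaleR_conv_of_real field_simps)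
  have "(\<lambda>n. ((of_real \<xi> + w) ^ n /\<^sub>R fact n - (of_real \<xi> - w) ^ n /\<^sub>R fact n) / 2)
          sums ((exp (of_real \<xi> + w) - exp (of_real \<xi> - w)) / 2)"
    by (intro sums_divide sums_diff exp)
  then show "(\<lambda>n. of_real (snd (pow_coeffs \<xi> \<nu> n) / fact n) * w)
           sums ((exp (of_real \<xi> + w) - exp (of_real \<xi> - w)) / 2)"
    unfolding plus minus by (simp add: scaleR_conv_of_real field_simps)
qed

lemma exp_plus_minus_csqrt:
  fixes \<xi> \<nu> :: real
  defines "w \<equiv> csqrt (of_real \<nu>)"
  shows "(exp (of_real \<xi> + w) + exp (of_real \<xi> - w)) / 2 = of_real (exp \<xi> * cosh_sqrt \<nu>)"
    and "(exp (of_real \<xi> + w) - exp (of_real \<xi> - w)) / 2 = of_real (exp \<xi> * sinch_sqrt \<nu>) * w"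
proof -
  consider "0 < \<nu>" | "\<nu> = 0" | "\<nu> < 0" by linarith
  then have "(exp (of_real \<xi> + w) + exp (of_real \<xi> - w)) / 2 = of_real (exp \<xi> * cosh_sqrt \<nu>)
           \<and> (exp (of_real \<xi> + w) - exp (of_real \<xi> - w)) / 2 = of_real (exp \<xi> * sinch_sqrt \<nu>) * w"
  proof cases
    case 1
    then show ?thesis
      by (simp add: w_def csqrt_of_real complex_eq_iff Re_exp Im_exp cosh_sqrt_def sinch_sqrt_def
          cosh_def sinh_def exp_add exp_diff exp_minus field_simps)
  next
    case 3
    then show ?thesis
      by (simp add: w_def csqrt_of_real' complex_eq_iff Re_exp Im_exp cosh_sqrt_def sinch_sqrt_def)
  qed (simp add: w_def cosh_sqrt_def exp_of_real)
  then show "(exp (of_real \<xi> + w) + exp (of_real \<xi> - w)) / 2 = of_real (exp \<xi> * cosh_sqrt \<nu>)"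
    and "(exp (of_real \<xi> + w) - exp (of_real \<xi> - w)) / 2 = of_real (exp \<xi> * sinch_sqrt \<nu>) * w"
    by simp_all
qed

lemma pow_coeffs_zero_fst: "fst (pow_coeffs \<xi> 0 n) = \<xi> ^ n"
  by (induction n) simp_all

lemma pow_coeffs_zero_snd: "snd (pow_coeffs \<xi> 0 (Suc n)) = real (Suc n) * \<xi> ^ n"
  by (induction n) (simp_all add: pow_coeffs_zero_fst algebra_simps)

lemma pow_coeffs_sums:
  "(\<lambda>n. fst (pow_coeffs \<xi> \<nu> n) / fact n) sums (exp \<xi> * cosh_sqrt \<nu>)"
  "(\<lambda>n. snd (pow_coeffs \<xi> \<nu> n) / fact n) sums (exp \<xi> * sinch_sqrt \<nu>)"
proof -
  define w where "w = csqrt (of_real \<nu>)"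
  have w2: "w\<^sup>2 = of_real \<nu>"
    by (simp add: w_def)
  show "(\<lambda>n. fst (pow_coeffs \<xi> \<nu> n) / fact n) sums (exp \<xi> * cosh_sqrt \<nu>)"
    using pow_coeffs_sums_exp(1)[OF w2, of \<xi>]
    unfolding w_def exp_plus_minus_csqrt sums_of_real_iff .
  show "(\<lambda>n. snd (pow_coeffs \<xi> \<nu> n) / fact n) sums (exp \<xi> * sinch_sqrt \<nu>)"
  proof (cases "\<nu> = 0")
    case True
    have "(\<lambda>n. snd (pow_coeffs \<xi> 0 (Suc n)) / fact (Suc n)) = (\<lambda>n. \<xi> ^ n /\<^sub>R fact n)"
      by (simp add: pow_coeffs_zero_snd divide_simps del: pow_coeffs.simps of_nat_Suc)
    then have "(\<lambda>n. snd (pow_coeffs \<xi> 0 (Suc n)) / fact (Suc n)) sums exp \<xi>"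
      using exp_converges[of \<xi>] by simp
    then have "(\<lambda>n. snd (pow_coeffs \<xi> 0 n) / fact n) sums (exp \<xi> + snd (pow_coeffs \<xi> 0 0) / fact 0)"
      by (rule sums_Suc_iff[THEN iffD1])
    then show ?thesis
      using True by (simp add: sinch_sqrt_def)
  next
    case False
    then have "w \<noteq> 0"
      using w2 by auto
    show ?thesis
      using sums_divide[OF pow_coeffs_sums_exp(2)[OF w2, of \<xi>], of w]
      unfolding w_def exp_plus_minus_csqrt nonzero_mult_div_cancel_right[OF \<open>w \<noteq> 0\<close>, unfolded w_def]
        sums_of_real_iff .
  qed
qed

lemma mexp_scalar_plus_sqrt:
  assumes "(N::m2) ** N = \<nu> *\<^sub>R mat 1"
  shows "mexp (\<xi> *\<^sub>R mat 1 + N) = exp \<xi> *\<^sub>R (cosh_sqrt \<nu> *\<^sub>R mat 1 + sinch_sqrt \<nu> *\<^sub>R N)"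
proof -
  have "(\<lambda>n. (1 / fact n) *\<^sub>R mpow (\<xi> *\<^sub>R mat 1 + N) n)
          sums ((exp \<xi> * cosh_sqrt \<nu>) *\<^sub>R mat 1 + (exp \<xi> * sinch_sqrt \<nu>) *\<^sub>R N)"
    unfolding mpow_scalar_plus_sqrt[OF assms]
    using sums_add[OF sums_scaleR_left[OF pow_coeffs_sums(1)] sums_scaleR_left[OF pow_coeffs_sums(2)]]
    by (simp add: scaleR_add_right)
  then show ?thesis
    unfolding mexp_def by (simp add: sums_unique[symmetric] scaleR_add_right)
qed

lemma mexp_eq:
  "mexp X = exp (ca X) *\<^sub>R (cosh_sqrt (disc X) *\<^sub>R mat 1 + sinch_sqrt (disc X) *\<^sub>R traceless X)"
  using mexp_scalar_plus_sqrt[OF traceless_square, of "ca X" X] by (simp add: scalar_plus_traceless)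

lemma cosh_sqrt_sinch_sqrt: "(cosh_sqrt \<nu>)\<^sup>2 - \<nu> * (sinch_sqrt \<nu>)\<^sup>2 = 1"
proof -
  consider "0 < \<nu>" | "\<nu> = 0" | "\<nu> < 0" by linarith
  then show ?thesis
    by cases (simp_all add: cosh_sqrt_def sinch_sqrt_def power_divide cosh_square_eq)
qed

text \<open>The inverse of \<open>cosh_sqrt\<close> on \<open>(-\<pi>\<^sup>2, \<infinity>)\<close>. Along it \<open>AC\<close> is the reciprocal of
  \<open>sinch_sqrt\<close>, which is how \<open>AC\<close> enters the logarithm.\<close>

definition cosh_sqrt_inv :: "real \<Rightarrow> real" where
  "cosh_sqrt_inv x = (if x < 1 then - (arccos x)\<^sup>2 else (arcosh x)\<^sup>2)"

lemma cosh_sqrt_sq: "0 \<le> t \<Longrightarrow> cosh_sqrt (t\<^sup>2) = cosh t"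
  and cosh_sqrt_neg_sq: "0 \<le> t \<Longrightarrow> cosh_sqrt (- t\<^sup>2) = cos t"
  and sinch_sqrt_sq: "0 < t \<Longrightarrow> sinch_sqrt (t\<^sup>2) = sinh t / t"
  and sinch_sqrt_neg_sq: "0 < t \<Longrightarrow> sinch_sqrt (- t\<^sup>2) = sin t / t"
  by (auto simp: cosh_sqrt_def sinch_sqrt_def)

lemma AC_arccos: "\<lbrakk>-1 < x; x < 1\<rbrakk> \<Longrightarrow> AC x = arccos x / sin (arccos x)"
  by (simp add: AC_def sin_arccos)

lemma AC_arcosh: "1 < x \<Longrightarrow> AC x = arcosh x / sinh (arcosh x)"
  by (simp add: AC_def sinh_arcosh_real)

lemma cosh_sqrt_inv_AC:
  assumes "-1 < x"
  shows "0 < AC x"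
    and "(AC x)\<^sup>2 * (x\<^sup>2 - 1) = cosh_sqrt_inv x"
    and "- (pi\<^sup>2) < cosh_sqrt_inv x"
    and "cosh_sqrt (cosh_sqrt_inv x) = x"
    and "sinch_sqrt (cosh_sqrt_inv x) * AC x = 1"
proof -
  consider "x < 1" | "x = 1" | "1 < x" by linarith
  then have "0 < AC x \<and> (AC x)\<^sup>2 * (x\<^sup>2 - 1) = cosh_sqrt_inv x \<and> - (pi\<^sup>2) < cosh_sqrt_inv x
      \<and> cosh_sqrt (cosh_sqrt_inv x) = x \<and> sinch_sqrt (cosh_sqrt_inv x) * AC x = 1"
  proof cases
    case 1
    define t where "t = arccos x"
    have t: "0 < t" "t < pi" "cos t = x"
      using arccos_lt_bounded[of x] assms 1 by (auto simp: t_def)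
    have s: "0 < sin t" "(sin t)\<^sup>2 = 1 - x\<^sup>2"
      using t sin_gt_zero[of t] sin_cos_squared_add[of t] by auto
    have "t\<^sup>2 < pi\<^sup>2"
      using t by (simp add: power_strict_mono)
    then show ?thesis
      using 1 t s by (simp add: cosh_sqrt_inv_def AC_arccos assms t_def[symmetric] cosh_sqrt_neg_sq
          sinch_sqrt_neg_sq power_divide field_simps flip: distrib_left)
  next
    case 3
    define t where "t = arcosh x"
    have t: "0 < t" "cosh t = x"
      using 3 by (auto simp: t_def)
    have s: "0 < sinh t" "x\<^sup>2 = 1 + (sinh t)\<^sup>2"
      using t cosh_square_eq[of t] by auto
    have "- (pi\<^sup>2) < t\<^sup>2"
      by (smt (verit) pi_gt_zero zero_le_power2 zero_less_power)
    then show ?thesis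
      using 3 t s by (simp add: cosh_sqrt_inv_def AC_arcosh t_def[symmetric] cosh_sqrt_sq
          sinch_sqrt_sq power_divide field_simps)
  qed (simp add: cosh_sqrt_inv_def AC_def cosh_sqrt_def sinch_sqrt_def)
  then show "0 < AC x"
    and "(AC x)\<^sup>2 * (x\<^sup>2 - 1) = cosh_sqrt_inv x"
    and "- (pi\<^sup>2) < cosh_sqrt_inv x"
    and "cosh_sqrt (cosh_sqrt_inv x) = x"
    and "sinch_sqrt (cosh_sqrt_inv x) * AC x = 1"
    by auto
qed

lemma cosh_sqrt_inv_cosh_sqrt:
  assumes "- (pi\<^sup>2) < \<nu>"
  shows "-1 < cosh_sqrt \<nu>" and "cosh_sqrt_inv (cosh_sqrt \<nu>) = \<nu>"
proof -
  have "-1 < cosh_sqrt \<nu> \<and> cosh_sqrt_inv (cosh_sqrt \<nu>) = \<nu>"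
  proof (cases "0 \<le> \<nu>")
    case True
    define t where "t = sqrt \<nu>"
    have t: "0 \<le> t" "\<nu> = t\<^sup>2"
      using True by (auto simp: t_def)
    show ?thesis
      using t cosh_real_ge_1[of t] by (simp add: cosh_sqrt_sq cosh_sqrt_inv_def arcosh_cosh_real)
  next
    case False
    define t where "t = sqrt (- \<nu>)"
    have t: "0 < t" "\<nu> = - t\<^sup>2"
      using False by (auto simp: t_def)
    have "t < pi"
      using assms t by (auto intro: power2_less_imp_less)
    then have "-1 < cos t" "cos t < 1"
      using cos_monotone_0_pi[of t pi] cos_monotone_0_pi[of 0 t] t by auto
    then show ?thesis
      using t \<open>t < pi\<close> by (simp add: cosh_sqrt_neg_sq cosh_sqrt_inv_def arccos_cos)
  qed
  then show "-1 < cosh_sqrt \<nu>" and "cosh_sqrt_inv (cosh_sqrt \<nu>) = \<nu>"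
    by auto
qed

definition is_principal_log :: "m2 \<Rightarrow> m2 \<Rightarrow> bool" where
  "is_principal_log A X \<longleftrightarrow> mexp X = A \<and> (\<forall>\<mu>. is_ceigen X \<mu> \<longrightarrow> - pi < Im \<mu> \<and> Im \<mu> < pi)"

definition plog_formula :: "m2 \<Rightarrow> m2" where
  "plog_formula A = ln (sqrt (det A)) *\<^sub>R mat 1
     + (AC (ca A / sqrt (det A)) / sqrt (det A)) *\<^sub>R traceless A"

lemma principal_spectrum_iff:
  "(\<forall>\<mu>. is_ceigen X \<mu> \<longrightarrow> - pi < Im \<mu> \<and> Im \<mu> < pi) \<longleftrightarrow> - (pi\<^sup>2) < disc X"
proof
  assume spec: "\<forall>\<mu>. is_ceigen X \<mu> \<longrightarrow> - pi < Im \<mu> \<and> Im \<mu> < pi"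
  show "- (pi\<^sup>2) < disc X"
  proof (cases "disc X < 0")
    case True
    define t where "t = sqrt (- disc X)"
    have "is_ceigen X (of_real (ca X) + \<i> * of_real t)"
      using True by (simp add: is_ceigen_iff t_def power_mult_distrib flip: of_real_power)
    then have "t < pi"
      using spec by fastforce
    then have "t\<^sup>2 < pi\<^sup>2"
      using True by (intro power_strict_mono) (auto simp: t_def)
    then show ?thesis
      using True by (simp add: t_def)
  qed (smt (verit) pi_gt_zero zero_less_power)
next
  assume disc: "- (pi\<^sup>2) < disc X"
  show "\<forall>\<mu>. is_ceigen X \<mu> \<longrightarrow> - pi < Im \<mu> \<and> Im \<mu> < pi"
  proof (intro allI impI)
    fix \<mu>
    assume "is_ceigen X \<mu>"
    then have w: "(\<mu> - of_real (ca X))\<^sup>2 = of_real (disc X)"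
      by (simp add: is_ceigen_iff)
    have "Im \<mu> = 0 \<or> Re \<mu> = ca X" and "(Re \<mu> - ca X)\<^sup>2 - (Im \<mu>)\<^sup>2 = disc X"
      using arg_cong[OF w, of Im] arg_cong[OF w, of Re] by (simp_all add: power2_eq_square)
    then consider "Im \<mu> = 0" | "(Im \<mu>)\<^sup>2 < pi\<^sup>2"
      using disc by fastforce
    then show "- pi < Im \<mu> \<and> Im \<mu> < pi"
      by cases (use power2_less_imp_less[of "\<bar>Im \<mu>\<bar>" pi] in auto)
  qed
qed

lemma is_principal_log_plog_formula:
  assumes "0 < det A" and "-1 < ca A / sqrt (det A)"
  shows "is_principal_log A (plog_formula A)"
proof -
  define s x where "s = sqrt (det A)" and "x = ca A / s"
  have s: "0 < s" "s\<^sup>2 = det A"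
    using assms(1) by (auto simp: s_def)
  have x: "-1 < x"
    using assms(2) by (simp add: x_def s_def)
  have "disc A = s\<^sup>2 * (x\<^sup>2 - 1)"
    using s by (simp add: x_def det_eq_ca_disc power_divide algebra_simps)
  then have disc: "disc (plog_formula A) = cosh_sqrt_inv x"
    using s assms(1) by (simp add: plog_formula_def s_def[symmetric] x_def[symmetric] power_divide
        flip: cosh_sqrt_inv_AC(2)[OF x])
  have "mexp (plog_formula A) = (s * x) *\<^sub>R mat 1 + (sinch_sqrt (cosh_sqrt_inv x) * AC x) *\<^sub>R traceless A"
    unfolding mexp_eq disc using s cosh_sqrt_inv_AC(4)[OF x]
    by (simp add: plog_formula_def s_def[symmetric] x_def[symmetric] scaleR_add_right)
  also have "\<dots> = A"
    using s cosh_sqrt_inv_AC(5)[OF x] by (simp add: x_def scalar_plus_traceless)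
  finally show ?thesis
    using cosh_sqrt_inv_AC(3)[OF x]
    by (simp add: is_principal_log_def principal_spectrum_iff disc)
qed

lemma is_principal_log_unique:
  assumes "is_principal_log A X"
  shows "X = plog_formula A"
proof -
  define \<xi> \<nu> where "\<xi> = ca X" and "\<nu> = disc X"
  have A: "A = (exp \<xi> * cosh_sqrt \<nu>) *\<^sub>R mat 1 + (exp \<xi> * sinch_sqrt \<nu>) *\<^sub>R traceless X"
    using assms by (simp add: is_principal_log_def mexp_eq \<xi>_def \<nu>_def scaleR_add_right)
  have \<nu>: "- (pi\<^sup>2) < \<nu>"
    using assms by (simp add: is_principal_log_def principal_spectrum_iff \<nu>_def)
  have "det A = (exp \<xi>)\<^sup>2 * ((cosh_sqrt \<nu>)\<^sup>2 - \<nu> * (sinch_sqrt \<nu>)\<^sup>2)"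
    by (subst A) (simp add: det_eq_ca_disc \<nu>_def power_mult_distrib algebra_simps)
  then have det: "sqrt (det A) = exp \<xi>"
    by (simp add: cosh_sqrt_sinch_sqrt)
  have "ca A / sqrt (det A) = cosh_sqrt \<nu>"
    unfolding det by (subst A) simp
  then have "AC (ca A / sqrt (det A)) * sinch_sqrt \<nu> = 1"
    using cosh_sqrt_inv_AC(5)[of "cosh_sqrt \<nu>"] cosh_sqrt_inv_cosh_sqrt[OF \<nu>]
    by (simp add: mult.commute)
  moreover have "traceless A = (exp \<xi> * sinch_sqrt \<nu>) *\<^sub>R traceless X"
    by (subst A) simp
  ultimately have "plog_formula A = \<xi> *\<^sub>R mat 1 + traceless X"
    by (simp add: plog_formula_def det)
  then show ?thesis
    by (simp add: \<xi>_def scalar_plus_traceless)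
qed

lemma plog_eq_plog_formula:
  assumes "0 < det A" and "-1 < ca A / sqrt (det A)"
  shows "plog A = plog_formula A"
  unfolding plog_def is_principal_log_def[symmetric]
  using is_principal_log_plog_formula[OF assms] is_principal_log_unique by (rule the_equality)

lemma cross_term_le:
  fixes x y z w s t :: real
  shows "(x*z + y*w) * (s\<^sup>2 - t\<^sup>2) + 2 * (x*w - y*z) * s * t
      \<le> sqrt (x\<^sup>2 + y\<^sup>2) * sqrt (z\<^sup>2 + w\<^sup>2) * (s\<^sup>2 + t\<^sup>2)"
proof -
  define F where "F = (x*z + y*w) * (s\<^sup>2 - t\<^sup>2) + 2 * (x*w - y*z) * s * t"
  define m where "m = sqrt (x\<^sup>2 + y\<^sup>2) * sqrt (z\<^sup>2 + w\<^sup>2)"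
  have "m\<^sup>2 = (x*z + y*w)\<^sup>2 + (x*w - y*z)\<^sup>2"
    by (simp add: m_def power_mult_distrib algebra_simps power2_eq_square)
  then have "(m * (s\<^sup>2 + t\<^sup>2))\<^sup>2 - F\<^sup>2 = (2 * (x*z + y*w) * s * t - (x*w - y*z) * (s\<^sup>2 - t\<^sup>2))\<^sup>2"
    unfolding F_def power_mult_distrib by (simp add: algebra_simps power2_eq_square)
  then have "F\<^sup>2 \<le> (m * (s\<^sup>2 + t\<^sup>2))\<^sup>2"
    by (smt (verit) zero_le_power2)
  then have "F \<le> m * (s\<^sup>2 + t\<^sup>2)"
    by (rule power2_le_imp_le) (simp add: m_def)
  then show ?thesis
    by (simp add: F_def m_def)
qed

lemma cross_term_attained:
  fixes \<alpha> \<beta> m :: real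
  assumes "m\<^sup>2 = \<alpha>\<^sup>2 + \<beta>\<^sup>2"
  shows "\<alpha> * ((m + \<alpha>)\<^sup>2 - \<beta>\<^sup>2) + 2 * \<beta> * (m + \<alpha>) * \<beta> = m * ((m + \<alpha>)\<^sup>2 + \<beta>\<^sup>2)"
proof -
  have "\<alpha> * ((m + \<alpha>)\<^sup>2 - \<beta>\<^sup>2) + 2 * \<beta> * (m + \<alpha>) * \<beta> - m * ((m + \<alpha>)\<^sup>2 + \<beta>\<^sup>2)
      = (m + \<alpha>) * (\<alpha>\<^sup>2 + \<beta>\<^sup>2 - m\<^sup>2)"
    by (simp add: algebra_simps power2_eq_square)
  then show ?thesis
    using assms by simp
qed

lemma norm_vec2_sq: "(norm (v::real^2))\<^sup>2 = (v$1)\<^sup>2 + (v$2)\<^sup>2"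
  by (simp add: norm_vec_def L2_set_def sum_2)

lemma norm_m2_mult_sq:
  fixes X :: m2 and v :: "real^2"
  defines "x \<equiv> ca X" and "y \<equiv> cb X" and "z \<equiv> cc X" and "w \<equiv> cd X"
  shows "(norm (X *v v))\<^sup>2 = (x\<^sup>2 + y\<^sup>2 + z\<^sup>2 + w\<^sup>2) * (norm v)\<^sup>2
           + 2 * ((x*z + y*w) * ((v$1)\<^sup>2 - (v$2)\<^sup>2) + 2 * (x*w - y*z) * v$1 * v$2)"
proof -
  have "(X *v v)$1 = (x + z) * v$1 + (w - y) * v$2" and "(X *v v)$2 = (y + w) * v$1 + (x - z) * v$2"
    by (simp_all add: matrix_vector_mult_def sum_2 assms ca_def cb_def cc_def cd_def field_simps)
  then show ?thesis
    unfolding norm_vec2_sq by (simp only:) (simp add: algebra_simps power2_eq_square)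
qed

lemma opnorm2_eq: "opnorm2 X = sqrt ((ca X)\<^sup>2 + (cb X)\<^sup>2) + sqrt ((cc X)\<^sup>2 + (cd X)\<^sup>2)"
proof -
  define x y z w where "x = ca X" and "y = cb X" and "z = cc X" and "w = cd X"
  define p s where "p = sqrt (x\<^sup>2 + y\<^sup>2)" and "s = sqrt (z\<^sup>2 + w\<^sup>2)"
  have p: "0 \<le> p" "p\<^sup>2 = x\<^sup>2 + y\<^sup>2" and s: "0 \<le> s" "s\<^sup>2 = z\<^sup>2 + w\<^sup>2"
    by (simp_all add: p_def s_def)
  have norm_sq: "(norm (X *v v))\<^sup>2 = (p\<^sup>2 + s\<^sup>2) * (norm v)\<^sup>2
      + 2 * ((x*z + y*w) * ((v$1)\<^sup>2 - (v$2)\<^sup>2) + 2 * (x*w - y*z) * v$1 * v$2)" for v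
    unfolding norm_m2_mult_sq p s x_def y_def z_def w_def by (simp add: algebra_simps)
  have upper: "norm (X *v v) \<le> (p + s) * norm v" for v
  proof -
    have "(norm (X *v v))\<^sup>2 \<le> ((p + s) * norm v)\<^sup>2"
      using cross_term_le[where x=x and y=y and z=z and w=w and s="v$1" and t="v$2", folded p_def s_def]
      unfolding norm_sq norm_vec2_sq[symmetric] by (simp add: power2_eq_square algebra_simps)
    then show ?thesis
      by (rule power2_le_imp_le) (simp add: p s)
  qed
  define \<alpha> \<beta> where "\<alpha> = x*z + y*w" and "\<beta> = x*w - y*z"
  have "(p * s)\<^sup>2 = \<alpha>\<^sup>2 + \<beta>\<^sup>2"
    unfolding \<alpha>_def \<beta>_def power_mult_distrib p s by (simp add: algebra_simps power2_eq_square)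
  \<comment> \<open>the cross term is maximal in the direction of \<open>(ps + \<alpha>, \<beta>)\<close>, or of \<open>(0, 1)\<close> when that vanishes\<close>
  then obtain v :: "real^2" where "v \<noteq> 0"
    and v: "\<alpha> * ((v$1)\<^sup>2 - (v$2)\<^sup>2) + 2 * \<beta> * v$1 * v$2 = p * s * (norm v)\<^sup>2"
  proof (cases "p * s + \<alpha> = 0 \<and> \<beta> = 0")
    case True
    then show ?thesis
      by (intro that[of "vector [0, 1]"]) (auto simp: norm_vec2_sq vec_eq_iff forall_2)
  next
    case False
    then show ?thesis
      using cross_term_attained[OF \<open>(p * s)\<^sup>2 = _\<close>]
      by (intro that[of "vector [p * s + \<alpha>, \<beta>]"]) (auto simp: norm_vec2_sq vec_eq_iff forall_2)
  qed
  have "(norm (X *v v))\<^sup>2 = ((p + s) * norm v)\<^sup>2"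
    unfolding norm_sq using v by (simp add: \<alpha>_def \<beta>_def power2_eq_square algebra_simps)
  then have "norm (X *v v) = (p + s) * norm v"
    using p s by (simp add: power2_eq_iff_nonneg)
  then have "p + s \<le> onorm ((*v) X)"
    using le_onorm[of "(*v) X" v] \<open>v \<noteq> 0\<close> by simp
  moreover have "onorm ((*v) X) \<le> p + s"
    by (rule onorm_le) (rule upper)
  ultimately show ?thesis
    by (simp add: opnorm2_def p_def s_def x_def y_def z_def w_def)
qed

lemma conorm2_eq: "conorm2 X = sqrt ((ca X)\<^sup>2 + (cb X)\<^sup>2) - sqrt ((cc X)\<^sup>2 + (cd X)\<^sup>2)"
proof -
  define p s where "p = sqrt ((ca X)\<^sup>2 + (cb X)\<^sup>2)" and "s = sqrt ((cc X)\<^sup>2 + (cd X)\<^sup>2)"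
  have "0 \<le> p" "0 \<le> s" and det: "det X = p\<^sup>2 - s\<^sup>2"
    by (simp_all add: p_def s_def m2_det_eq_coeffs)
  show ?thesis
  proof (cases "X = 0")
    case True
    then show ?thesis
      by (simp add: conorm2_def ca_def cb_def cc_def cd_def)
  next
    case False
    then have "opnorm2 X \<noteq> 0"
      by (simp add: opnorm2_def onorm_eq_0 matrix_eq)
    then have "opnorm2 X = p + s" and "p + s \<noteq> 0"
      by (simp_all add: opnorm2_eq p_def s_def)
    then show ?thesis
      unfolding p_def[symmetric] s_def[symmetric] using False
      by (simp add: conorm2_def det power2_eq_square field_simps)
  qed
qed

lemma norms_scalar_plus_traceless:
  assumes "0 \<le> v"
  shows "opnorm2 (u *\<^sub>R mat 1 + v *\<^sub>R traceless X)
           = sqrt (u\<^sup>2 + (v * cb X)\<^sup>2) + v * sqrt ((cc X)\<^sup>2 + (cd X)\<^sup>2)"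
    and "conorm2 (u *\<^sub>R mat 1 + v *\<^sub>R traceless X)
           = sqrt (u\<^sup>2 + (v * cb X)\<^sup>2) - v * sqrt ((cc X)\<^sup>2 + (cd X)\<^sup>2)"
  using assms by (simp_all add: opnorm2_eq conorm2_eq power_mult_distrib real_sqrt_mult
      flip: distrib_left)

lemma det_sub_scalar: "det (A - t *\<^sub>R mat 1) = (ca A - t)\<^sup>2 - disc A"
proof -
  have "ca (A - t *\<^sub>R mat 1) = ca A - t" and "disc (A - t *\<^sub>R mat 1) = disc A"
    by (simp_all add: disc_def ca_def cb_def cc_def cd_def field_simps)
  then show ?thesis
    by (simp add: det_eq_ca_disc)
qed

lemma no_nonpos_eigenvalueD:
  assumes "\<forall>t::real. t \<le> 0 \<longrightarrow> det (A - t *\<^sub>R mat 1) \<noteq> 0"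
  shows "0 < det A" and "-1 < ca A / sqrt (det A)"
proof -
  have "0 < det A \<and> - sqrt (det A) < ca A"
  proof (cases "disc A < 0")
    case True
    then have "(ca A)\<^sup>2 < det A"
      by (simp add: det_eq_ca_disc)
    moreover have "- ca A < sqrt (det A)"
      using calculation by (intro real_less_rsqrt) simp
    ultimately show ?thesis
      by (smt (verit) zero_le_power2)
  next
    case False
    define t where "t = ca A - sqrt (disc A)"
    \<comment> \<open>\<open>t\<close> is the smaller real eigenvalue, so it must be positive\<close>
    have "det (A - t *\<^sub>R mat 1) = 0"
      using False by (simp add: det_sub_scalar t_def)
    then have "\<not> t \<le> 0"
      using assms by blast
    then have "sqrt (disc A) < ca A"
      by (simp add: t_def)
    moreover have "(sqrt (disc A))\<^sup>2 < (ca A)\<^sup>2"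
      using calculation False by (intro power_strict_mono) auto
    ultimately show ?thesis
      using False by (simp add: det_eq_ca_disc) (smt (verit) real_sqrt_ge_zero)
  qed
  then show "0 < det A" and "-1 < ca A / sqrt (det A)"
    by (simp_all add: field_simps)
qed

lemma PD_eq_cballD:
  assumes "PD A = cball (Complex a b) r"
  shows "a = ca A" and "b = \<bar>cb A\<bar>" and "r = sqrt ((cc A)\<^sup>2 + (cd A)\<^sup>2)"
proof -
  have "\<not> (cc A)\<^sup>2 + (cd A)\<^sup>2 < 0"
    by (simp add: not_less)
  then show "a = ca A" and "b = \<bar>cb A\<bar>" and "r = sqrt ((cc A)\<^sup>2 + (cd A)\<^sup>2)"
    using assms by (auto simp: PD_def cball_eq_cball_iff)
qed

lemma fCA_fRD_unit:
  assumes "a\<^sup>2 + b\<^sup>2 - r\<^sup>2 = 1" and "0 \<le> b" and "0 \<le> AC a"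
  shows "fCA a b r = AC a * b" and "fRD a b r = AC a * r"
  using assms by (simp_all add: fCA_def fRD_def)

theorem lemma10p1:
  fixes A :: "real^2^2" and a b r :: real
  assumes noneg: "\<forall>t::real. t \<le> 0 \<longrightarrow> det (A - t *\<^sub>R mat 1) \<noteq> 0"
    and pd: "PD A = cball (Complex a b) r"
  shows "opnorm2 (plog A) = fCA a b r + fRD a b r
       \<and> conorm2 (plog A) = fCA a b r - fRD a b r
       \<and> (det A = 1 \<longrightarrow> fCA a b r = AC a * b \<and> fRD a b r = AC a * r)"
proof -
  note coeffs = PD_eq_cballD[OF pd]
  note spec = no_nonpos_eigenvalueD[OF noneg]
  define s where "s = sqrt (det A)"
  have \<Delta>: "a\<^sup>2 + b\<^sup>2 - r\<^sup>2 = det A"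
    by (simp add: coeffs m2_det_eq_coeffs)
  have AC: "0 < AC (a / s)"
    using spec by (simp add: cosh_sqrt_inv_AC(1) coeffs s_def)
  have "fCA a b r = sqrt ((ln s)\<^sup>2 + (AC (a / s) / s * cb A)\<^sup>2)"
    and "fRD a b r = AC (a / s) / s * sqrt ((cc A)\<^sup>2 + (cd A)\<^sup>2)"
    unfolding fCA_def fRD_def Let_def \<Delta> s_def[symmetric]
    by (simp_all add: coeffs(2,3) power_mult_distrib power_divide)
  moreover have "plog A = ln s *\<^sub>R mat 1 + (AC (a / s) / s) *\<^sub>R traceless A"
    using plog_eq_plog_formula[OF spec] by (simp add: plog_formula_def s_def coeffs)
  moreover have "det A = 1 \<Longrightarrow> fCA a b r = AC a * b \<and> fRD a b r = AC a * r"
    using fCA_fRD_unit[of a b r] AC \<Delta> by (simp add: s_def coeffs)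
  ultimately show ?thesis
    using AC spec(1) by (simp add: norms_scalar_plus_traceless s_def)
qed

end
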